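(* For any constant $\beta\in\mathbb R$, the system $\dot I=\varepsilon(\beta\sin\theta+1)$, $\dot\theta=I$, $(I,\theta)\in\mathbb R\times\mathbb T$, has no non-constant real-analytic first integral depending analytically on $\varepsilon$ near $\varepsilon=0$.
   Context: $\mathbb T=\mathbb R/2\pi\mathbb Z$; $\varepsilon$ is a small real parameter. *)

theory Defs
  imports "HOL-Analysis.Analysis"
begin

definition real_analytic3_on ::
  "(real \<Rightarrow> real \<Rightarrow> real \<Rightarrow> real) \<Rightarrow> (real \<times> real \<times> real) set \<Rightarrow> bool" where
  "real_analytic3_on F S \<longleftrightarrow>
     (\<forall>p\<in>S. \<exists>r>0. ball p r \<subseteq> S \<and>
        (\<exists>a :: nat \<times> nat \<times> nat \<Rightarrow> real.
           \<forall>x\<in>ball p r.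
             ((\<lambda>(i,j,k). a (i,j,k) * (fst x - fst p) ^ i
                  * (fst (snd x) - fst (snd p)) ^ j
                  * (snd (snd x) - snd (snd p)) ^ k)
               has_sum F (fst x) (fst (snd x)) (snd (snd x))) UNIV))"

text \<open>G (a function of (I, theta), theta taken modulo 2 pi via its lift to R)
  is a first integral of  I' = eps (beta sin theta + 1), theta' = I :
  it is constant along every solution.\<close>
definition first_integral :: "real \<Rightarrow> real \<Rightarrow> (real \<Rightarrow> real \<Rightarrow> real) \<Rightarrow> bool" where
  "first_integral \<beta> \<epsilon> G \<longleftrightarrow>
     (\<forall>x y :: real \<Rightarrow> real.
        (\<forall>t. (x has_real_derivative \<epsilon> * (\<beta> * sin (y t) + 1)) (at t) \<and>
             (y has_real_derivative x t) (at t))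
        \<longrightarrow> (\<forall>t. G (x t) (y t) = G (x 0) (y 0)))"

end

(* Near \<epsilon> = 0 write an analytic first integral as F I \<theta> \<epsilon> = \<Sum> c k I \<theta> \<epsilon>^k, each c k being
   2\<pi>-periodic in \<theta>. Differentiating F along solutions, which exist globally by Picard iteration,
   gives I \<partial>F/\<partial>\<theta> + \<epsilon> (\<beta> sin \<theta> + 1) \<partial>F/\<partial>I = 0, that is I \<partial>(c 0)/\<partial>\<theta> = 0 and
   I \<partial>(c (k+1))/\<partial>\<theta> + (\<beta> sin \<theta> + 1) \<partial>(c k)/\<partial>I = 0.
   By induction every c k is constant: once c (k-1) is constant, I \<partial>(c k)/\<partial>\<theta> = 0, so c k does not
   depend on \<theta> (at I = 0 by continuity); integrating the next equation over a period, where c (k+1)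
   is periodic and \<beta> sin \<theta> + 1 has mean 1, then gives \<partial>(c k)/\<partial>I = 0.
   Hence F I \<theta> \<epsilon> does not depend on (I, \<theta>) for small \<epsilon>, and by analyticity in \<epsilon> not at all. *)

theory Submission
  imports Defs
begin

section \<open>Global solutions of planar Lipschitz systems\<close>

definition primitive :: "(real \<Rightarrow> real) \<Rightarrow> real \<Rightarrow> real" where
  "primitive h = (SOME P. P 0 = 0 \<and> (\<forall>t. (P has_real_derivative h t) (at t)))"

lemma primitive:
  assumes "continuous_on UNIV h"
  shows primitive_at_0: "primitive h 0 = 0"
    and has_real_derivative_primitive: "(primitive h has_real_derivative h t) (at t)"
proof -
  obtain P where P: "\<And>x. (P has_vector_derivative h x) (at x)"
    using einterval_antiderivative[of "-\<infinity>" "\<infinity>" h] assms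
    by (auto simp: continuous_on_eq_continuous_at)
  have "\<exists>P. P 0 = 0 \<and> (\<forall>t. (P has_real_derivative h t) (at t))"
    by (rule exI[of _ "\<lambda>t. P t - P 0"])
       (use P in \<open>auto simp: has_real_derivative_iff_has_vector_derivative intro!: derivative_eq_intros\<close>)
  from someI_ex[OF this] show "primitive h 0 = 0" "(primitive h has_real_derivative h t) (at t)"
    unfolding primitive_def by auto
qed

lemma abs_le_of_derivative_bound_nonneg:
  fixes A a :: "real \<Rightarrow> real"
  assumes "t \<ge> 0" "A 0 = 0" "\<And>s. (A has_real_derivative a s) (at s)"
    and "\<And>s. \<bar>a s\<bar> \<le> c * \<bar>s\<bar> ^ m / fact m"
  shows "\<bar>A t\<bar> \<le> c * t ^ Suc m / fact (Suc m)"
proof -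
  define G where "G s = c * s ^ Suc m / fact (Suc m)" for s :: real
  have G: "(G has_real_derivative c * s ^ m / fact m) (at s)" for s
    unfolding G_def by (rule derivative_eq_intros refl | simp)+
  have bound: "\<bar>a s\<bar> \<le> c * s ^ m / fact m" if "s \<ge> 0" for s
    using assms(4)[of s] that by simp
  have "G 0 - A 0 \<le> G t - A t"
    by (rule DERIV_nonneg_imp_nondecreasing[OF assms(1)], rule exI, rule conjI,
        rule DERIV_diff[OF G assms(3)]) (auto dest!: bound simp: abs_le_iff)
  moreover have "G 0 + A 0 \<le> G t + A t"
    by (rule DERIV_nonneg_imp_nondecreasing[OF assms(1)], rule exI, rule conjI,
        rule DERIV_add[OF G assms(3)]) (auto dest!: bound simp: abs_le_iff)
  ultimately show ?thesis using assms(2) by (simp add: G_def abs_le_iff)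
qed

lemma abs_le_of_derivative_bound:
  fixes A a :: "real \<Rightarrow> real"
  assumes "A 0 = 0" "\<And>s. (A has_real_derivative a s) (at s)"
    and "\<And>s. \<bar>a s\<bar> \<le> c * \<bar>s\<bar> ^ m / fact m"
  shows "\<bar>A t\<bar> \<le> c * \<bar>t\<bar> ^ Suc m / fact (Suc m)"
proof (cases "t \<ge> 0")
  case True
  then show ?thesis using abs_le_of_derivative_bound_nonneg[OF True assms] by simp
next
  case False
  have "\<bar>A (- (- t))\<bar> \<le> c * (- t) ^ Suc m / fact (Suc m)"
  proof (rule abs_le_of_derivative_bound_nonneg[where A="\<lambda>s. A (- s)" and a="\<lambda>s. - a (- s)"])
    show "((\<lambda>s. A (- s)) has_real_derivative - a (- s)) (at s)" for s
      using DERIV_chain2[OF assms(2)[of "-s"] DERIV_minus[OF DERIV_ident]] by simp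
    show "\<bar>- a (- s)\<bar> \<le> c * \<bar>s\<bar> ^ m / fact m" for s
      using assms(3)[of "-s"] by simp
  qed (use False assms(1) in auto)
  then show ?thesis using False by simp
qed

lemma tendsto_lipschitz2:
  fixes \<phi> :: "real \<Rightarrow> real \<Rightarrow> real"
  assumes \<phi>: "\<And>x y x' y'. \<bar>\<phi> x y - \<phi> x' y'\<bar> \<le> L * (\<bar>x - x'\<bar> + \<bar>y - y'\<bar>)"
    and "(x \<longlongrightarrow> a) F" "(y \<longlongrightarrow> b) F"
  shows "((\<lambda>z. \<phi> (x z) (y z)) \<longlongrightarrow> \<phi> a b) F"
proof (rule metric_tendsto_imp_tendsto)
  have "((\<lambda>z. L * (norm (x z - a) + norm (y z - b))) \<longlongrightarrow> L * (norm (a - a) + norm (b - b))) F"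
    by (intro tendsto_intros assms(2,3))
  then show "((\<lambda>z. L * (norm (x z - a) + norm (y z - b))) \<longlongrightarrow> 0) F"
    by simp
qed (use \<phi> in \<open>auto simp: dist_real_def intro!: always_eventually order_trans[OF _ abs_ge_self]\<close>)

lemma continuous_on_lipschitz2:
  fixes \<phi> :: "real \<Rightarrow> real \<Rightarrow> real"
  assumes "\<And>x y x' y'. \<bar>\<phi> x y - \<phi> x' y'\<bar> \<le> L * (\<bar>x - x'\<bar> + \<bar>y - y'\<bar>)"
    and "continuous_on UNIV x" "continuous_on UNIV y"
  shows "continuous_on UNIV (\<lambda>s. \<phi> (x s) (y s))"
  using assms(2,3) unfolding continuous_on_def by (blast intro: tendsto_lipschitz2[OF assms(1)])

lemma uniform_limit_lipschitz2:
  fixes \<phi> :: "real \<Rightarrow> real \<Rightarrow> real"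
  assumes \<phi>: "\<And>x y x' y'. \<bar>\<phi> x y - \<phi> x' y'\<bar> \<le> L * (\<bar>x - x'\<bar> + \<bar>y - y'\<bar>)"
    and "uniform_limit S x a F" "uniform_limit S y b F"
  shows "uniform_limit S (\<lambda>n s. \<phi> (x n s) (y n s)) (\<lambda>s. \<phi> (a s) (b s)) F"
proof (rule metric_uniform_limit_imp_uniform_limit)
  have "uniform_limit S (\<lambda>n s. L * (norm (x n s - a s) + norm (y n s - b s)))
      (\<lambda>s. L * (norm (a s - a s) + norm (b s - b s))) F"
    by (intro uniform_limit_intros assms(2,3))
  then show "uniform_limit S (\<lambda>n s. L * (norm (x n s - a s) + norm (y n s - b s))) (\<lambda>_. 0) F"
    by simp
qed (use \<phi> in \<open>auto simp: dist_real_def intro!: always_eventually order_trans[OF _ abs_ge_self]\<close>)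

lemma uniform_limit_telescoping:
  fixes f :: "nat \<Rightarrow> real \<Rightarrow> real"
  assumes "\<And>n t. t \<in> S \<Longrightarrow> \<bar>f (Suc n) t - f n t\<bar> \<le> M n" "summable M"
  shows "uniform_limit S f (\<lambda>t. f 0 t + (\<Sum>i. f (Suc i) t - f i t)) sequentially"
proof -
  have "uniform_limit S (\<lambda>n t. \<Sum>i<n. f (Suc i) t - f i t) (\<lambda>t. \<Sum>i. f (Suc i) t - f i t) sequentially"
    by (rule Weierstrass_m_test) (use assms in auto)
  then have "uniform_limit S (\<lambda>n t. f 0 t + (\<Sum>i<n. f (Suc i) t - f i t))
      (\<lambda>t. f 0 t + (\<Sum>i. f (Suc i) t - f i t)) sequentially"
    by (intro uniform_limit_intros)
  moreover have "(\<Sum>i<n. f (Suc i) t - f i t) = f n t - f 0 t" for n t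
    by (rule sum_lessThan_telescope)
  ultimately show ?thesis
    by simp
qed

lemma has_real_derivative_uniform_limit:
  fixes h \<phi> :: "nat \<Rightarrow> real \<Rightarrow> real"
  assumes deriv: "\<And>n t. (h n has_real_derivative \<phi> n t) (at t)"
    and unif: "\<And>T. uniform_limit {-T<..<T} \<phi> \<Phi> sequentially"
    and lim: "\<And>t. (\<lambda>n. h n t) \<longlonglongrightarrow> H t"
  shows "(H has_real_derivative \<Phi> t) (at t)"
proof -
  define S where "S = {-(\<bar>t\<bar> + 1)<..<\<bar>t\<bar> + 1}"
  have S: "t \<in> S" "open S" "convex S" by (auto simp: S_def)
  have "\<exists>g. \<forall>x\<in>S. (\<lambda>n. h n x) \<longlonglongrightarrow> g x \<and> (g has_derivative (*) (\<Phi> x)) (at x within S)"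
  proof (rule has_derivative_sequence[OF S(3) _ _ S(1) lim])
    show "(h n has_derivative (*) (\<phi> n x)) (at x within S)" for n x
      using deriv[of n x] by (simp add: has_field_derivative_def has_derivative_at_withinI)
    fix e :: real assume "e > 0"
    from uniform_limitD[OF unif[of "\<bar>t\<bar> + 1"] this]
    show "\<forall>\<^sub>F n in sequentially. \<forall>x\<in>S. \<forall>d. norm (\<phi> n x * d - \<Phi> x * d) \<le> e * norm d"
    proof eventually_elim
      case (elim n)
      show ?case
      proof (intro ballI allI)
        fix x d assume "x \<in> S"
        then have "\<bar>\<phi> n x - \<Phi> x\<bar> \<le> e"
          using bspec[OF elim \<open>x \<in> S\<close>[unfolded S_def]] by (simp add: dist_real_def)
        then show "norm (\<phi> n x * d - \<Phi> x * d) \<le> e * norm d"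
          by (simp add: left_diff_distrib[symmetric] abs_mult mult_right_mono)
      qed
    qed
  qed
  then obtain g where g_lim: "\<And>x. x \<in> S \<Longrightarrow> (\<lambda>n. h n x) \<longlonglongrightarrow> g x"
    and g_deriv: "(g has_derivative (*) (\<Phi> t)) (at t within S)"
    using S(1) by blast
  have "(g has_real_derivative \<Phi> t) (at t)"
    using g_deriv at_within_open[OF S(1,2)] by (simp add: has_field_derivative_def)
  moreover have "g x = H x" if "x \<in> S" for x
    using LIMSEQ_unique[OF g_lim[OF that] lim] .
  ultimately show ?thesis
    by (rule has_field_derivative_transform_within_open[OF _ S(2,1)])
qed

lemma summable_exp_tail_bound:
  fixes C K T :: real
  assumes "K > 0"
  shows "summable (\<lambda>n. C * K ^ n * T ^ Suc n / fact (Suc n))"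
proof -
  have "summable (\<lambda>n. C / K * (inverse (fact (n + 1)) * (K * T) ^ (n + 1)))"
    by (intro summable_mult summable_ignore_initial_segment summable_exp)
  moreover have "C / K * (inverse (fact (n + 1)) * (K * T) ^ (n + 1)) = C * K ^ n * T ^ Suc n / fact (Suc n)" for n
    using assms by (simp add: power_mult_distrib field_simps)
  ultimately show ?thesis
    by simp
qed

fun picard :: "(real \<Rightarrow> real \<Rightarrow> real) \<Rightarrow> (real \<Rightarrow> real \<Rightarrow> real) \<Rightarrow> real \<Rightarrow> real \<Rightarrow> nat
    \<Rightarrow> (real \<Rightarrow> real) \<times> (real \<Rightarrow> real)" where
  "picard f g x0 y0 0 = (\<lambda>_. x0, \<lambda>_. y0)"
| "picard f g x0 y0 (Suc n) =
     (\<lambda>t. x0 + primitive (\<lambda>s. f (fst (picard f g x0 y0 n) s) (snd (picard f g x0 y0 n) s)) t,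
      \<lambda>t. y0 + primitive (\<lambda>s. g (fst (picard f g x0 y0 n) s) (snd (picard f g x0 y0 n) s)) t)"

context
  fixes f g :: "real \<Rightarrow> real \<Rightarrow> real" and L x0 y0 :: real
  assumes L: "L \<ge> 0"
    and lipschitz_f: "\<And>x y x' y'. \<bar>f x y - f x' y'\<bar> \<le> L * (\<bar>x - x'\<bar> + \<bar>y - y'\<bar>)"
    and lipschitz_g: "\<And>x y x' y'. \<bar>g x y - g x' y'\<bar> \<le> L * (\<bar>x - x'\<bar> + \<bar>y - y'\<bar>)"
begin

abbreviation "X n \<equiv> fst (picard f g x0 y0 n)"
abbreviation "Y n \<equiv> snd (picard f g x0 y0 n)"

lemma picard_Suc:
  shows "(X (Suc n) has_real_derivative f (X n t) (Y n t)) (at t)"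
    and "(Y (Suc n) has_real_derivative g (X n t) (Y n t)) (at t)"
    and "X (Suc n) 0 = x0" "Y (Suc n) 0 = y0"
proof -
  have "continuous_on UNIV (X n) \<and> continuous_on UNIV (Y n)" for n
  proof (induction n)
    case (Suc n)
    then have "continuous_on UNIV (\<lambda>s. f (X n s) (Y n s))" "continuous_on UNIV (\<lambda>s. g (X n s) (Y n s))"
      using continuous_on_lipschitz2 lipschitz_f lipschitz_g by blast+
    then show ?case
      by (auto intro!: DERIV_continuous_on derivative_eq_intros has_real_derivative_primitive)
  qed simp
  then have "continuous_on UNIV (\<lambda>s. f (X n s) (Y n s))" "continuous_on UNIV (\<lambda>s. g (X n s) (Y n s))"
    using continuous_on_lipschitz2 lipschitz_f lipschitz_g by blast+
  then show "(X (Suc n) has_real_derivative f (X n t) (Y n t)) (at t)"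
    "(Y (Suc n) has_real_derivative g (X n t) (Y n t)) (at t)" "X (Suc n) 0 = x0" "Y (Suc n) 0 = y0"
    by (auto intro!: derivative_eq_intros has_real_derivative_primitive simp: primitive_at_0)
qed

declare picard.simps(2)[simp del]

lemma picard_at_0: "X n 0 = x0" "Y n 0 = y0"
  by (cases n; simp only: picard_Suc; simp)+

lemma picard_step_bound:
  defines "C \<equiv> \<bar>f x0 y0\<bar> + \<bar>g x0 y0\<bar>" and "K \<equiv> 2 * L + 1"
  shows "\<bar>X (Suc n) t - X n t\<bar> + \<bar>Y (Suc n) t - Y n t\<bar> \<le> C * K ^ n * \<bar>t\<bar> ^ Suc n / fact (Suc n)"
proof (induction n arbitrary: t)
  case 0
  have "\<bar>X 1 t - X 0 t\<bar> \<le> \<bar>f x0 y0\<bar> * \<bar>t\<bar> ^ Suc 0 / fact (Suc 0)"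
    by (rule abs_le_of_derivative_bound[where a="\<lambda>_. f x0 y0"])
       (auto intro!: derivative_eq_intros picard_Suc simp: picard_at_0)
  moreover have "\<bar>Y 1 t - Y 0 t\<bar> \<le> \<bar>g x0 y0\<bar> * \<bar>t\<bar> ^ Suc 0 / fact (Suc 0)"
    by (rule abs_le_of_derivative_bound[where a="\<lambda>_. g x0 y0"])
       (auto intro!: derivative_eq_intros picard_Suc simp: picard_at_0)
  ultimately show ?case by (simp add: C_def algebra_simps)
next
  case (Suc n)
  have step: "\<bar>\<phi> (X (Suc n) s) (Y (Suc n) s) - \<phi> (X n s) (Y n s)\<bar> \<le> (L * C * K ^ n) * \<bar>s\<bar> ^ Suc n / fact (Suc n)"
    if "\<And>x y x' y'. \<bar>\<phi> x y - \<phi> x' y'\<bar> \<le> L * (\<bar>x - x'\<bar> + \<bar>y - y'\<bar>)" for \<phi> s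
    using order_trans[OF that mult_left_mono[OF Suc.IH L]] by (simp add: mult.assoc)
  have "\<bar>X (Suc (Suc n)) t - X (Suc n) t\<bar> \<le> (L * C * K ^ n) * \<bar>t\<bar> ^ Suc (Suc n) / fact (Suc (Suc n))"
    by (rule abs_le_of_derivative_bound[where a="\<lambda>s. f (X (Suc n) s) (Y (Suc n) s) - f (X n s) (Y n s)"])
       (use step[OF lipschitz_f] in \<open>auto intro!: derivative_eq_intros picard_Suc simp: picard_at_0\<close>)
  moreover have "\<bar>Y (Suc (Suc n)) t - Y (Suc n) t\<bar> \<le> (L * C * K ^ n) * \<bar>t\<bar> ^ Suc (Suc n) / fact (Suc (Suc n))"
    by (rule abs_le_of_derivative_bound[where a="\<lambda>s. g (X (Suc n) s) (Y (Suc n) s) - g (X n s) (Y n s)"])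
       (use step[OF lipschitz_g] in \<open>auto intro!: derivative_eq_intros picard_Suc simp: picard_at_0\<close>)
  moreover have "2 * ((L * C * K ^ n) * \<bar>t\<bar> ^ Suc (Suc n) / fact (Suc (Suc n)))
      \<le> C * K ^ Suc n * \<bar>t\<bar> ^ Suc (Suc n) / fact (Suc (Suc n))"
  proof -
    have "(2 * L) * (C * K ^ n * \<bar>t\<bar> ^ Suc (Suc n) / fact (Suc (Suc n)))
        \<le> K * (C * K ^ n * \<bar>t\<bar> ^ Suc (Suc n) / fact (Suc (Suc n)))"
      using L by (intro mult_right_mono) (auto simp: K_def C_def)
    then show ?thesis
      by (simp add: mult_ac)
  qed
  ultimately show ?case
    by linarith
qed

definition picard_limit_x :: "real \<Rightarrow> real" where
  "picard_limit_x t = x0 + (\<Sum>i. X (Suc i) t - X i t)"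

definition picard_limit_y :: "real \<Rightarrow> real" where
  "picard_limit_y t = y0 + (\<Sum>i. Y (Suc i) t - Y i t)"

lemma uniform_limit_picard:
  shows "uniform_limit {-T<..<T} X picard_limit_x sequentially"
    and "uniform_limit {-T<..<T} Y picard_limit_y sequentially"
proof -
  define M where "M n = (\<bar>f x0 y0\<bar> + \<bar>g x0 y0\<bar>) * (2 * L + 1) ^ n * T ^ Suc n / fact (Suc n)" for n
  have "\<bar>X (Suc n) t - X n t\<bar> \<le> M n" "\<bar>Y (Suc n) t - Y n t\<bar> \<le> M n" if "t \<in> {-T<..<T}" for n t
  proof -
    have "\<bar>t\<bar> ^ Suc n \<le> T ^ Suc n"
      using that by (intro power_mono) auto
    then have "(\<bar>f x0 y0\<bar> + \<bar>g x0 y0\<bar>) * (2 * L + 1) ^ n * \<bar>t\<bar> ^ Suc n / fact (Suc n) \<le> M n"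
      unfolding M_def using L by (intro divide_right_mono mult_left_mono) auto
    then show "\<bar>X (Suc n) t - X n t\<bar> \<le> M n" "\<bar>Y (Suc n) t - Y n t\<bar> \<le> M n"
      using picard_step_bound[of n t] by linarith+
  qed
  moreover have "summable M"
    unfolding M_def using L by (intro summable_exp_tail_bound) simp
  ultimately show "uniform_limit {-T<..<T} X picard_limit_x sequentially"
    "uniform_limit {-T<..<T} Y picard_limit_y sequentially"
    using uniform_limit_telescoping[of "{-T<..<T}" X M] uniform_limit_telescoping[of "{-T<..<T}" Y M]
    by (simp_all add: picard_limit_x_def[abs_def] picard_limit_y_def[abs_def] picard_at_0)
qed

lemma picard_limit_solves:
  shows "(picard_limit_x has_real_derivative f (picard_limit_x t) (picard_limit_y t)) (at t)"
    and "(picard_limit_y has_real_derivative g (picard_limit_x t) (picard_limit_y t)) (at t)"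
proof -
  have lim: "(\<lambda>n. X n t) \<longlonglongrightarrow> picard_limit_x t" "(\<lambda>n. Y n t) \<longlonglongrightarrow> picard_limit_y t" for t
  proof -
    have "t \<in> {-(\<bar>t\<bar> + 1)<..<\<bar>t\<bar> + 1}" by auto
    then show "(\<lambda>n. X n t) \<longlonglongrightarrow> picard_limit_x t" "(\<lambda>n. Y n t) \<longlonglongrightarrow> picard_limit_y t"
      using tendsto_uniform_limitI[OF uniform_limit_picard(1)] tendsto_uniform_limitI[OF uniform_limit_picard(2)]
      by blast+
  qed
  show "(picard_limit_x has_real_derivative f (picard_limit_x t) (picard_limit_y t)) (at t)"
    by (rule has_real_derivative_uniform_limit[where h="\<lambda>n. X (Suc n)"])
       (auto intro: picard_Suc uniform_limit_lipschitz2[OF lipschitz_f] uniform_limit_picard LIMSEQ_Suc lim)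
  show "(picard_limit_y has_real_derivative g (picard_limit_x t) (picard_limit_y t)) (at t)"
    by (rule has_real_derivative_uniform_limit[where h="\<lambda>n. Y (Suc n)"])
       (auto intro: picard_Suc uniform_limit_lipschitz2[OF lipschitz_g] uniform_limit_picard LIMSEQ_Suc lim)
qed

lemma picard_limit_at_0: "picard_limit_x 0 = x0" "picard_limit_y 0 = y0"
  by (simp_all add: picard_limit_x_def picard_limit_y_def picard_at_0 del: picard.simps)

end

lemma lipschitz_planar_system_solution:
  fixes f g :: "real \<Rightarrow> real \<Rightarrow> real"
  assumes "L \<ge> 0"
    and "\<And>x y x' y'. \<bar>f x y - f x' y'\<bar> \<le> L * (\<bar>x - x'\<bar> + \<bar>y - y'\<bar>)"
    and "\<And>x y x' y'. \<bar>g x y - g x' y'\<bar> \<le> L * (\<bar>x - x'\<bar> + \<bar>y - y'\<bar>)"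
  obtains x y where "x 0 = x0" "y 0 = y0"
    and "\<And>t. (x has_real_derivative f (x t) (y t)) (at t)"
    and "\<And>t. (y has_real_derivative g (x t) (y t)) (at t)"
  using picard_limit_solves[OF assms] picard_limit_at_0[OF assms] by blast

lemma abs_sin_diff_le: "\<bar>sin (u::real) - sin v\<bar> \<le> \<bar>u - v\<bar>"
proof -
  have "\<bar>sin u - sin v\<bar> = 2 * \<bar>sin ((u - v) / 2)\<bar> * \<bar>cos ((u + v) / 2)\<bar>"
    by (simp add: sin_diff_sin abs_mult)
  also have "\<dots> \<le> 2 * \<bar>(u - v) / 2\<bar> * 1"
    by (intro mult_mono abs_sin_x_le_abs_x) auto
  finally show ?thesis by simp
qed

lemma first_integral_system_solution:
  obtains x y where "x 0 = x0" "y 0 = y0"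
    and "\<And>t. (x has_real_derivative \<epsilon> * (\<beta> * sin (y t) + 1)) (at t)"
    and "\<And>t. (y has_real_derivative x t) (at t)"
proof -
  define L where "L = \<bar>\<epsilon> * \<beta>\<bar> + 1"
  have L: "L \<ge> 0" by (simp add: L_def)
  have f: "\<bar>\<epsilon> * (\<beta> * sin y + 1) - \<epsilon> * (\<beta> * sin y' + 1)\<bar> \<le> L * (\<bar>x - x'\<bar> + \<bar>y - y'\<bar>)" for x y x' y' :: real
  proof -
    have "\<bar>\<epsilon> * (\<beta> * sin y + 1) - \<epsilon> * (\<beta> * sin y' + 1)\<bar> = \<bar>\<epsilon> * \<beta>\<bar> * \<bar>sin y - sin y'\<bar>"
      by (simp add: abs_mult[symmetric] algebra_simps)
    also have "\<dots> \<le> L * (\<bar>x - x'\<bar> + \<bar>y - y'\<bar>)"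
      unfolding L_def by (intro mult_mono order_trans[OF abs_sin_diff_le]) auto
    finally show ?thesis .
  qed
  have g: "\<bar>x - x'\<bar> \<le> L * (\<bar>x - x'\<bar> + \<bar>y - y'\<bar>)" for x y x' y' :: real
    by (simp add: L_def algebra_simps)
  show ?thesis
    by (rule lipschitz_planar_system_solution[OF L f g, of x0 y0]) (rule that)
qed

section \<open>Local power series in one variable\<close>

definition powser_expansion :: "(real \<Rightarrow> real) \<Rightarrow> (nat \<Rightarrow> real) \<Rightarrow> bool" where
  "powser_expansion g d \<longleftrightarrow> (\<exists>r>0. \<forall>w. \<bar>w\<bar> < r \<longrightarrow> (\<lambda>k. d k * w ^ k) sums g w)"

lemma powser_expansion_zero_if_vanishing_left:
  assumes "powser_expansion g d" "\<delta> > 0" "\<And>w. - \<delta> < w \<Longrightarrow> w < 0 \<Longrightarrow> g w = 0"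
  shows "d n = 0"
proof -
  obtain r where r: "r > 0" and sums: "\<And>w. \<bar>w\<bar> < r \<Longrightarrow> (\<lambda>k. d k * w ^ k) sums g w"
    using assms(1) unfolding powser_expansion_def by blast
  show ?thesis
  proof (induction n rule: less_induct)
    case (less n)
    define h where "h w = g w / w ^ n" for w :: real
    have "(\<lambda>k. d (k + n) * w ^ k) sums h w" if "w \<noteq> 0" "norm w < r" for w
    proof -
      have "(\<Sum>i<n. d i * w ^ i) = 0"
        using less by simp
      then have "(\<lambda>k. d (k + n) * w ^ (k + n)) sums g w"
        using sums_split_initial_segment[OF sums[of w], of n] that by simp
      then have "(\<lambda>k. d (k + n) * w ^ (k + n) / w ^ n) sums (g w / w ^ n)"
        by (rule sums_divide)
      then show ?thesis
        using that by (simp add: h_def power_add)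
    qed
    then have "(h \<longlongrightarrow> d (0 + n)) (at 0)"
      by (intro powser_limit_0_strong[OF r])
    then have "(h \<longlongrightarrow> d n) (at_left 0)"
      by (simp add: filterlim_at_split)
    moreover have "eventually (\<lambda>w. h w = 0) (at_left (0::real))"
    proof -
      have "eventually (\<lambda>w. w \<in> {- \<delta><..<0}) (at_left (0::real))"
        using eventually_at_left_real[of "- \<delta>" 0] assms(2) by simp
      then show ?thesis
        by eventually_elim (simp add: h_def assms(3))
    qed
    ultimately have "((\<lambda>_. 0) \<longlongrightarrow> d n) (at_left (0::real))"
      by (rule Lim_transform_eventually)
    from tendsto_unique[OF trivial_limit_at_left_real tendsto_const this]
    show "d n = 0"
      by simp
  qed
qed

lemma powser_expansion_unique:
  assumes "powser_expansion g d1" "powser_expansion g d2"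
  shows "d1 = d2"
proof
  fix n
  obtain r1 r2 where r1: "r1 > 0" "\<And>w. \<bar>w\<bar> < r1 \<Longrightarrow> (\<lambda>k. d1 k * w ^ k) sums g w"
    and r2: "r2 > 0" "\<And>w. \<bar>w\<bar> < r2 \<Longrightarrow> (\<lambda>k. d2 k * w ^ k) sums g w"
    using assms unfolding powser_expansion_def by blast
  have "(\<lambda>k. (d1 k - d2 k) * w ^ k) sums 0" if "\<bar>w\<bar> < min r1 r2" for w
    using sums_diff[OF r1(2)[of w] r2(2)[of w]] that by (simp add: algebra_simps)
  then have "powser_expansion (\<lambda>_. 0) (\<lambda>k. d1 k - d2 k)"
    unfolding powser_expansion_def using r1 r2 by (intro exI[of _ "min r1 r2"]) auto
  then have "d1 n - d2 n = 0"
    by (rule powser_expansion_zero_if_vanishing_left[where \<delta>=1]) auto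
  then show "d1 n = d2 n"
    by simp
qed

lemma powser_expansion_has_derivative_0:
  assumes "powser_expansion g d"
  shows "(g has_real_derivative d 1) (at 0)"
proof -
  obtain r where r: "r > 0" and sums: "\<And>w. \<bar>w\<bar> < r \<Longrightarrow> (\<lambda>k. d k * w ^ k) sums g w"
    using assms unfolding powser_expansion_def by blast
  have g0: "g 0 = d 0"
    using sums_unique2[OF sums[of 0] powser_sums_zero] r by simp
  have "(\<lambda>k. d (Suc k) * w ^ k) sums ((g w - d 0) / w)" if "w \<noteq> 0" "norm w < r" for w
  proof -
    have "(\<lambda>k. d (Suc k) * w ^ Suc k) sums (g w - d 0)"
      using sums[of w] that by (subst sums_Suc_iff) simp
    then have "(\<lambda>k. d (Suc k) * w ^ Suc k / w) sums ((g w - d 0) / w)"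
      by (rule sums_divide)
    then show ?thesis
      using that by simp
  qed
  then have "((\<lambda>w. (g w - d 0) / w) \<longlongrightarrow> d (Suc 0)) (at 0)"
    by (intro powser_limit_0_strong[OF r])
  then show ?thesis
    unfolding has_field_derivative_iff by (simp add: g0)
qed

lemma powser_expansion_has_derivative:
  assumes "powser_expansion (\<lambda>v. g (x + v)) d"
  shows "(g has_real_derivative d 1) (at x)"
  using powser_expansion_has_derivative_0[OF assms] DERIV_shift[of g "d 1" 0 x]
  by (simp add: add.commute)

lemma powser_expansion_cong:
  assumes "powser_expansion g d" "\<delta> > 0" "\<And>w. \<bar>w\<bar> < \<delta> \<Longrightarrow> h w = g w"
  shows "powser_expansion h d"
proof -
  obtain r where "r > 0" "\<And>w. \<bar>w\<bar> < r \<Longrightarrow> (\<lambda>k. d k * w ^ k) sums g w"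
    using assms(1) unfolding powser_expansion_def by blast
  then show ?thesis
    unfolding powser_expansion_def using assms(2,3) by (intro exI[of _ "min r \<delta>"]) auto
qed

lemma powser_expansion_diff:
  assumes "powser_expansion g d" "powser_expansion h d'"
  shows "powser_expansion (\<lambda>w. g w - h w) (\<lambda>k. d k - d' k)"
proof -
  obtain r r' where "r > 0" and g: "\<And>w. \<bar>w\<bar> < r \<Longrightarrow> (\<lambda>k. d k * w ^ k) sums g w"
    and "r' > 0" and h: "\<And>w. \<bar>w\<bar> < r' \<Longrightarrow> (\<lambda>k. d' k * w ^ k) sums h w"
    using assms unfolding powser_expansion_def by blast
  have "(\<lambda>k. (d k - d' k) * w ^ k) sums (g w - h w)" if "\<bar>w\<bar> < min r r'" for w
    using sums_diff[OF g h] that by (simp add: left_diff_distrib)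
  then show ?thesis
    unfolding powser_expansion_def using \<open>r > 0\<close> \<open>r' > 0\<close> by (intro exI[of _ "min r r'"]) auto
qed

lemma powser_expansion_same_coeffs:
  assumes "powser_expansion g d" "powser_expansion h d"
  obtains \<delta> where "\<delta> > 0" "\<And>w. \<bar>w\<bar> < \<delta> \<Longrightarrow> g w = h w"
proof -
  obtain r1 r2 where "r1 > 0" and g: "\<And>w. \<bar>w\<bar> < r1 \<Longrightarrow> (\<lambda>k. d k * w ^ k) sums g w"
    and "r2 > 0" and h: "\<And>w. \<bar>w\<bar> < r2 \<Longrightarrow> (\<lambda>k. d k * w ^ k) sums h w"
    using assms unfolding powser_expansion_def by blast
  have "g w = h w" if "\<bar>w\<bar> < min r1 r2" for w
    using sums_unique2[OF g h] that by simp
  then show ?thesis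
    using \<open>r1 > 0\<close> \<open>r2 > 0\<close> by (intro that[of "min r1 r2"]) auto
qed

lemma powser_expansion_reflect:
  assumes "powser_expansion g d"
  shows "powser_expansion (\<lambda>w. g (- w)) (\<lambda>k. (- 1) ^ k * d k)"
proof -
  obtain r where r: "r > 0" and sums: "\<And>w. \<bar>w\<bar> < r \<Longrightarrow> (\<lambda>k. d k * w ^ k) sums g w"
    using assms unfolding powser_expansion_def by blast
  have "(\<lambda>k. (- 1) ^ k * d k * w ^ k) sums g (- w)" if "\<bar>w\<bar> < r" for w
    using sums[of "- w"] that by (simp add: power_minus[of w] mult_ac)
  then show ?thesis
    unfolding powser_expansion_def using r by blast
qed

lemma powser_expansions_vanishing_forward:
  fixes D :: "real \<Rightarrow> real"
  assumes local: "\<And>e. 0 \<le> e \<Longrightarrow> e \<le> t \<Longrightarrow> \<exists>d. powser_expansion (\<lambda>w. D (e + w)) d"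
    and "\<delta> > 0" and vanishing: "\<And>w. \<bar>w\<bar> < \<delta> \<Longrightarrow> D w = 0" and "0 \<le> t"
  shows "D t = 0"
proof -
  define A where "A = {\<tau>. 0 \<le> \<tau> \<and> \<tau> \<le> t \<and> (\<forall>u. 0 \<le> u \<and> u \<le> \<tau> \<longrightarrow> D u = 0)}"
  define s where "s = Sup A"
  have "0 \<in> A" "bdd_above A"
    using assms by (auto simp: A_def bdd_above_def)
  then have s: "0 \<le> s" "s \<le> t"
    unfolding s_def by (auto intro!: cSup_upper cSup_least simp: A_def)
  have below: "D u = 0" if u: "0 \<le> u" "u < s" for u
  proof -
    obtain \<tau> where "\<tau> \<in> A" "u < \<tau>"
      using less_cSup_iff[OF _ \<open>bdd_above A\<close>, of u] \<open>0 \<in> A\<close> u unfolding s_def by blast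
    then show ?thesis
      using u by (auto simp: A_def)
  qed
  obtain d r where "r > 0" and sums: "\<And>w. \<bar>w\<bar> < r \<Longrightarrow> (\<lambda>k. d k * w ^ k) sums D (s + w)"
    using local[OF s] unfolding powser_expansion_def by blast
  then have "powser_expansion (\<lambda>w. D (s + w)) d"
    unfolding powser_expansion_def by blast
  \<comment> \<open>D vanishes just left of s: on [0, s) if s > 0, and on (-\<delta>, 0) if s = 0.\<close>
  moreover have "D (s + w) = 0" if "- (if s = 0 then \<delta> else s) < w" "w < 0" for w
    using that below vanishing \<open>\<delta> > 0\<close> s by (auto split: if_splits)
  ultimately have "d k = 0" for k
    using powser_expansion_zero_if_vanishing_left[of _ d "if s = 0 then \<delta> else s"] \<open>\<delta> > 0\<close> s
    by (auto split: if_splits)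
  then have near: "D (s + w) = 0" if "\<bar>w\<bar> < r" for w
    using sums_unique2[OF sums[OF that]] by simp
  have "s = t"
  proof (rule ccontr)
    assume "s \<noteq> t"
    define \<tau> where "\<tau> = min (s + r / 2) t"
    have "D u = 0" if "0 \<le> u" "u \<le> \<tau>" for u
      using below[of u] near[of "u - s"] that \<open>r > 0\<close> by (cases "u < s") (auto simp: \<tau>_def)
    then have "\<tau> \<in> A"
      using s \<open>r > 0\<close> \<open>s \<noteq> t\<close> by (auto simp: A_def \<tau>_def)
    then have "\<tau> \<le> s"
      unfolding s_def using cSup_upper[OF _ \<open>bdd_above A\<close>] by blast
    then show False
      using s \<open>r > 0\<close> \<open>s \<noteq> t\<close> by (auto simp: \<tau>_def)
  qed
  then show ?thesis
    using near[of 0] \<open>r > 0\<close> by simp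
qed

lemma powser_expansions_vanishing:
  fixes D :: "real \<Rightarrow> real"
  assumes J: "is_interval J" "0 \<in> J" "t \<in> J"
    and local: "\<And>e. e \<in> J \<Longrightarrow> \<exists>d. powser_expansion (\<lambda>w. D (e + w)) d"
    and "\<delta> > 0" "\<And>w. \<bar>w\<bar> < \<delta> \<Longrightarrow> D w = 0"
  shows "D t = 0"
proof (cases "t \<ge> 0")
  case True
  have "e \<in> J" if "0 \<le> e" "e \<le> t" for e
    using mem_is_interval_1_I[OF J that] .
  then show ?thesis
    by (intro powser_expansions_vanishing_forward[OF _ assms(5,6) True] local)
next
  case False
  have "D (- (- t)) = 0"
  proof (rule powser_expansions_vanishing_forward[where D="\<lambda>e. D (- e)"])
    fix e :: real assume "0 \<le> e" "e \<le> - t"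
    then have "- e \<in> J"
      using mem_is_interval_1_I[OF J(1,3,2), of "- e"] by simp
    then obtain d where "powser_expansion (\<lambda>w. D (- e + w)) d"
      using local by blast
    from powser_expansion_reflect[OF this]
    show "\<exists>d. powser_expansion (\<lambda>w. D (- (e + w))) d"
      by auto
  qed (use assms(5,6) False in auto)
  then show ?thesis
    by simp
qed

section \<open>Local triple power series\<close>

lemma has_sum_reindex_vanishing_outside:
  fixes f :: "'a \<Rightarrow> 'c::{comm_monoid_add, topological_space}" and g :: "'b \<Rightarrow> 'a"
  assumes "(f has_sum S) UNIV" "inj g" "\<And>x. x \<notin> range g \<Longrightarrow> f x = 0"
  shows "((\<lambda>y. f (g y)) has_sum S) UNIV"
proof -
  have "(f has_sum S) (range g)"
    using has_sum_cong_neutral[of UNIV "range g" f f S] assms(1,3) by auto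
  then show ?thesis
    using has_sum_reindex[of g UNIV f S] assms(2) by (simp add: o_def)
qed

lemma summable_on_comp_inj:
  fixes f :: "'a \<Rightarrow> 'c::banach" and g :: "'b \<Rightarrow> 'a"
  assumes "f summable_on UNIV" "inj g"
  shows "(\<lambda>y. f (g y)) summable_on UNIV"
  using summable_on_subset_banach[OF assms(1), of "range g"] summable_on_reindex[of g UNIV f] assms(2)
  by (simp add: o_def)

lemma has_sum_imp_sums_regroup:
  fixes f :: "nat \<Rightarrow> nat \<Rightarrow> real"
  assumes "((\<lambda>(k, j). f k j * w ^ k) has_sum S) UNIV" "\<And>k. f k summable_on UNIV"
  shows "(\<lambda>k. (\<Sum>\<^sub>\<infinity>j. f k j) * w ^ k) sums S"
proof -
  have "((\<lambda>k. (\<Sum>\<^sub>\<infinity>j. f k j) * w ^ k) has_sum S) UNIV"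
  proof (rule has_sum_Sigma'[where B="\<lambda>_. UNIV"])
    show "((\<lambda>(k, j). f k j * w ^ k) has_sum S) (Sigma UNIV (\<lambda>_. UNIV))"
      using assms(1) by simp
    show "((\<lambda>j. (\<lambda>(k, j). f k j * w ^ k) (k, j)) has_sum (\<Sum>\<^sub>\<infinity>j. f k j) * w ^ k) UNIV" for k
      using has_sum_cmult_left[OF has_sum_infsum[OF assms(2)[of k]], of "w ^ k"] by simp
  qed
  then show ?thesis
    by (rule has_sum_imp_sums)
qed

definition higher_order :: "(nat \<times> nat \<times> nat) set" where
  "higher_order = {(i, j, k). 2 \<le> i + j}"

lemma first_order_Un_higher_order:
  "range (\<lambda>k. (0, 0, k)) \<union> range (\<lambda>k. (1, 0, k)) \<union> range (\<lambda>k. (0, 1, k)) \<union> higher_order = UNIV"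
proof -
  have "(i, j, k) \<in> range (\<lambda>k. (0, 0, k)) \<union> range (\<lambda>k. (1, 0, k)) \<union> range (\<lambda>k. (0, 1, k)) \<union> higher_order"
    for i j k :: nat
  proof -
    have "2 \<le> i + j \<or> (i = 0 \<and> j = 0) \<or> (i = 1 \<and> j = 0) \<or> (i = 0 \<and> j = 1)"
      by arith
    then show ?thesis
      by (auto simp: higher_order_def)
  qed
  then show ?thesis
    by auto
qed

locale triple_expansion =
  fixes F :: "real \<Rightarrow> real \<Rightarrow> real \<Rightarrow> real" and a :: "nat \<times> nat \<times> nat \<Rightarrow> real"
    and I0 \<theta>0 e \<rho> :: real
  assumes radius_pos: "\<rho> > 0"
    and expansion: "\<And>u v w. \<bar>u\<bar> \<le> \<rho> \<Longrightarrow> \<bar>v\<bar> \<le> \<rho> \<Longrightarrow> \<bar>w\<bar> \<le> \<rho> \<Longrightarrow>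
      ((\<lambda>(i, j, k). a (i, j, k) * u ^ i * v ^ j * w ^ k) has_sum F (I0 + u) (\<theta>0 + v) (e + w)) UNIV"
begin

definition majorant :: "nat \<times> nat \<times> nat \<Rightarrow> real" where
  "majorant = (\<lambda>(i, j, k). \<bar>a (i, j, k)\<bar> * \<rho> ^ i * \<rho> ^ j * \<rho> ^ k)"

definition coeff_series :: "nat \<Rightarrow> nat \<Rightarrow> real \<Rightarrow> real" where
  "coeff_series i j w = (\<Sum>\<^sub>\<infinity>k. a (i, j, k) * w ^ k)"

lemma majorant_summable: "majorant summable_on B"
proof -
  have "(\<lambda>(i, j, k). a (i, j, k) * \<rho> ^ i * \<rho> ^ j * \<rho> ^ k) summable_on UNIV"
    using expansion[of \<rho> \<rho> \<rho>] radius_pos unfolding summable_on_def by fastforce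
  then have "(\<lambda>x. norm ((\<lambda>(i, j, k). a (i, j, k) * \<rho> ^ i * \<rho> ^ j * \<rho> ^ k) x)) summable_on UNIV"
    using summable_on_iff_abs_summable_on_real by blast
  moreover have "norm ((\<lambda>(i, j, k). a (i, j, k) * \<rho> ^ i * \<rho> ^ j * \<rho> ^ k) x) = majorant x" for x
    using radius_pos by (auto simp: majorant_def abs_mult split: prod.splits)
  ultimately have "majorant summable_on UNIV"
    by simp
  then show ?thesis
    by (rule summable_on_subset_banach) simp
qed

lemma majorant_nonneg: "majorant x \<ge> 0"
  using radius_pos by (auto simp: majorant_def split: prod.splits)

lemma terms_summable:
  assumes "\<bar>u\<bar> \<le> \<rho>" "\<bar>v\<bar> \<le> \<rho>" "\<bar>w\<bar> \<le> \<rho>"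
  shows "(\<lambda>(i, j, k). a (i, j, k) * u ^ i * v ^ j * w ^ k) summable_on B"
proof -
  have "(\<lambda>x. norm (majorant x)) summable_on B"
    using majorant_summable summable_on_iff_abs_summable_on_real by blast
  then have "(\<lambda>x. norm ((\<lambda>(i, j, k). a (i, j, k) * u ^ i * v ^ j * w ^ k) x)) summable_on B"
  proof (rule Infinite_Sum.abs_summable_on_comparison_test)
    fix x :: "nat \<times> nat \<times> nat"
    obtain i j k where x: "x = (i, j, k)" by (cases x) auto
    have "\<bar>u\<bar> ^ i * \<bar>v\<bar> ^ j * \<bar>w\<bar> ^ k \<le> \<rho> ^ i * \<rho> ^ j * \<rho> ^ k"
      using assms by (intro mult_mono power_mono) auto
    then show "norm ((\<lambda>(i, j, k). a (i, j, k) * u ^ i * v ^ j * w ^ k) x) \<le> norm (majorant x)"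
      using radius_pos mult_left_mono[of _ _ "\<bar>a (i, j, k)\<bar>"]
      by (simp add: x majorant_def abs_mult power_abs mult.assoc)
  qed
  then show ?thesis
    using summable_on_iff_abs_summable_on_real by blast
qed

lemma has_sum_coeff_series:
  assumes "\<bar>w\<bar> \<le> \<rho>"
  shows "((\<lambda>k. a (i, j, k) * w ^ k) has_sum coeff_series i j w) UNIV"
proof -
  have "(\<lambda>k. (\<lambda>(i, j, k). a (i, j, k) * \<rho> ^ i * \<rho> ^ j * w ^ k) (i, j, k)) summable_on UNIV"
    by (rule summable_on_comp_inj[OF terms_summable]) (use assms radius_pos in \<open>auto simp: inj_def\<close>)
  then have "(\<lambda>k. a (i, j, k) * w ^ k) summable_on UNIV"
    using summable_on_cmult_left'[of "\<rho> ^ i * \<rho> ^ j" "\<lambda>k. a (i, j, k) * w ^ k" UNIV] radius_pos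
    by (simp add: mult_ac)
  then show ?thesis
    unfolding coeff_series_def by (rule has_sum_infsum)
qed

lemma theta_slice_summable:
  assumes "\<bar>v\<bar> \<le> \<rho>"
  shows "(\<lambda>j. a (0, j, k) * v ^ j) summable_on UNIV"
proof -
  have "(\<lambda>j. (\<lambda>(i, j, k). a (i, j, k) * \<rho> ^ i * v ^ j * \<rho> ^ k) (0, j, k)) summable_on UNIV"
    by (rule summable_on_comp_inj[OF terms_summable]) (use assms radius_pos in \<open>auto simp: inj_def\<close>)
  then show ?thesis
    using summable_on_cmult_left'[of "\<rho> ^ k" "\<lambda>j. a (0, j, k) * v ^ j" UNIV] radius_pos
    by (simp add: mult_ac)
qed

lemma I_slice_summable:
  assumes "\<bar>u\<bar> \<le> \<rho>"
  shows "(\<lambda>i. a (i, 0, k) * u ^ i) summable_on UNIV"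
proof -
  have "(\<lambda>i. (\<lambda>(i, j, k). a (i, j, k) * u ^ i * \<rho> ^ j * \<rho> ^ k) (i, 0, k)) summable_on UNIV"
    by (rule summable_on_comp_inj[OF terms_summable]) (use assms radius_pos in \<open>auto simp: inj_def\<close>)
  then show ?thesis
    using summable_on_cmult_left'[of "\<rho> ^ k" "\<lambda>i. a (i, 0, k) * u ^ i" UNIV] radius_pos
    by (simp add: mult_ac)
qed

lemma expansion_center:
  assumes "\<bar>w\<bar> \<le> \<rho>"
  shows "(\<lambda>k. a (0, 0, k) * w ^ k) sums F I0 \<theta>0 (e + w)"
proof -
  have "((\<lambda>k. (\<lambda>(i, j, k). a (i, j, k) * 0 ^ i * 0 ^ j * w ^ k) (0, 0, k)) has_sum F (I0 + 0) (\<theta>0 + 0) (e + w)) UNIV"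
    by (rule has_sum_reindex_vanishing_outside[OF expansion])
       (use assms radius_pos in \<open>auto simp: inj_def image_def\<close>)
  then show ?thesis
    by (intro has_sum_imp_sums) simp
qed

lemma powser_expansion_center: "powser_expansion (\<lambda>w. F I0 \<theta>0 (e + w)) (\<lambda>k. a (0, 0, k))"
  unfolding powser_expansion_def using expansion_center radius_pos less_imp_le by blast

lemma powser_expansion_theta_shift:
  assumes "\<bar>v\<bar> \<le> \<rho>"
  shows "powser_expansion (\<lambda>w. F I0 (\<theta>0 + v) (e + w)) (\<lambda>k. \<Sum>\<^sub>\<infinity>j. a (0, j, k) * v ^ j)"
proof -
  have "(\<lambda>k. (\<Sum>\<^sub>\<infinity>j. a (0, j, k) * v ^ j) * w ^ k) sums F I0 (\<theta>0 + v) (e + w)" if "\<bar>w\<bar> < \<rho>" for w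
  proof (rule has_sum_imp_sums_regroup)
    have "((\<lambda>y. (\<lambda>(i, j, k). a (i, j, k) * 0 ^ i * v ^ j * w ^ k) ((\<lambda>(k, j). (0, j, k)) y))
        has_sum F (I0 + 0) (\<theta>0 + v) (e + w)) UNIV"
      by (rule has_sum_reindex_vanishing_outside[OF expansion])
         (use assms that radius_pos in \<open>auto simp: inj_def image_def\<close>)
    then show "((\<lambda>(k, j). a (0, j, k) * v ^ j * w ^ k) has_sum F I0 (\<theta>0 + v) (e + w)) UNIV"
      by (simp add: case_prod_unfold)
    show "(\<lambda>j. a (0, j, k) * v ^ j) summable_on UNIV" for k
      using theta_slice_summable[OF assms] .
  qed
  then show ?thesis
    unfolding powser_expansion_def using radius_pos by blast
qed

lemma powser_expansion_I_shift:
  assumes "\<bar>u\<bar> \<le> \<rho>"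
  shows "powser_expansion (\<lambda>w. F (I0 + u) \<theta>0 (e + w)) (\<lambda>k. \<Sum>\<^sub>\<infinity>i. a (i, 0, k) * u ^ i)"
proof -
  have "(\<lambda>k. (\<Sum>\<^sub>\<infinity>i. a (i, 0, k) * u ^ i) * w ^ k) sums F (I0 + u) \<theta>0 (e + w)" if "\<bar>w\<bar> < \<rho>" for w
  proof (rule has_sum_imp_sums_regroup)
    have "((\<lambda>y. (\<lambda>(i, j, k). a (i, j, k) * u ^ i * 0 ^ j * w ^ k) ((\<lambda>(k, i). (i, 0, k)) y))
        has_sum F (I0 + u) (\<theta>0 + 0) (e + w)) UNIV"
      by (rule has_sum_reindex_vanishing_outside[OF expansion])
         (use assms that radius_pos in \<open>auto simp: inj_def image_def\<close>)
    then show "((\<lambda>(k, i). a (i, 0, k) * u ^ i * w ^ k) has_sum F (I0 + u) \<theta>0 (e + w)) UNIV"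
      by (simp add: case_prod_unfold)
    show "(\<lambda>i. a (i, 0, k) * u ^ i) summable_on UNIV" for k
      using I_slice_summable[OF assms] .
  qed
  then show ?thesis
    unfolding powser_expansion_def using radius_pos by blast
qed

lemma first_order_decomposition:
  assumes "\<bar>u\<bar> \<le> \<rho>" "\<bar>v\<bar> \<le> \<rho>" "\<bar>w\<bar> \<le> \<rho>"
  shows "F (I0 + u) (\<theta>0 + v) (e + w) = coeff_series 0 0 w + u * coeff_series 1 0 w + v * coeff_series 0 1 w
           + (\<Sum>\<^sub>\<infinity>(i, j, k)\<in>higher_order. a (i, j, k) * u ^ i * v ^ j * w ^ k)"
proof -
  define f where "f = (\<lambda>(i, j, k). a (i, j, k) * u ^ i * v ^ j * w ^ k)"
  have slice: "(f has_sum u ^ i * v ^ j * coeff_series i j w) (range (\<lambda>k. (i, j, k)))" for i j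
  proof -
    have "((f \<circ> (\<lambda>k. (i, j, k))) has_sum u ^ i * v ^ j * coeff_series i j w) UNIV"
      using has_sum_cmult_right[OF has_sum_coeff_series[OF assms(3)], of "u ^ i * v ^ j"]
      by (simp add: f_def o_def mult_ac)
    then show ?thesis
      by (subst has_sum_reindex) (auto simp: inj_def)
  qed
  have "(f has_sum coeff_series 0 0 w + u * coeff_series 1 0 w + v * coeff_series 0 1 w
      + (\<Sum>\<^sub>\<infinity>x\<in>higher_order. f x))
      (range (\<lambda>k. (0, 0, k)) \<union> range (\<lambda>k. (1, 0, k)) \<union> range (\<lambda>k. (0, 1, k)) \<union> higher_order)"
  proof (intro has_sum_Un_disjoint)
    show "(f has_sum coeff_series 0 0 w) (range (\<lambda>k. (0, 0, k)))"
      using slice[of 0 0] by simp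
    show "(f has_sum u * coeff_series 1 0 w) (range (\<lambda>k. (1, 0, k)))"
      using slice[of 1 0] by simp
    show "(f has_sum v * coeff_series 0 1 w) (range (\<lambda>k. (0, 1, k)))"
      using slice[of 0 1] by simp
    show "(f has_sum (\<Sum>\<^sub>\<infinity>x\<in>higher_order. f x)) higher_order"
      using terms_summable[OF assms] by (simp add: f_def)
  qed (auto simp: higher_order_def)
  then have "(f has_sum coeff_series 0 0 w + u * coeff_series 1 0 w + v * coeff_series 0 1 w
      + (\<Sum>\<^sub>\<infinity>x\<in>higher_order. f x)) UNIV"
    by (simp only: first_order_Un_higher_order)
  then show ?thesis
    using has_sum_unique[OF expansion[OF assms]] by (simp add: f_def)
qed

lemma higher_order_bound:
  assumes "\<bar>w\<bar> \<le> \<rho>" "0 \<le> s" "s \<le> \<rho>" "\<bar>u\<bar> \<le> s" "\<bar>v\<bar> \<le> s"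
  shows "\<bar>\<Sum>\<^sub>\<infinity>(i, j, k)\<in>higher_order. a (i, j, k) * u ^ i * v ^ j * w ^ k\<bar> \<le> (s / \<rho>) ^ 2 * (\<Sum>\<^sub>\<infinity>x. majorant x)"
proof -
  define f where "f = (\<lambda>(i, j, k). a (i, j, k) * u ^ i * v ^ j * w ^ k)"
  have term_bound: "norm (f x) \<le> (s / \<rho>) ^ 2 * majorant x" if "x \<in> higher_order" for x
  proof -
    obtain i j k where x: "x = (i, j, k)"
      by (cases x) auto
    have ij: "2 \<le> i + j"
      using that by (simp add: x higher_order_def)
    have "\<bar>u\<bar> ^ i * \<bar>v\<bar> ^ j \<le> s ^ (i + j)"
      using assms by (simp add: power_add mult_mono power_mono)
    also have "\<dots> = (s / \<rho>) ^ (i + j) * \<rho> ^ (i + j)"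
      using radius_pos by (simp add: power_divide)
    also have "\<dots> \<le> (s / \<rho>) ^ 2 * \<rho> ^ (i + j)"
      using assms radius_pos ij by (intro mult_right_mono power_decreasing) auto
    finally have uv: "\<bar>u\<bar> ^ i * \<bar>v\<bar> ^ j \<le> (s / \<rho>) ^ 2 * (\<rho> ^ i * \<rho> ^ j)"
      by (simp add: power_add)
    have w: "\<bar>w\<bar> ^ k \<le> \<rho> ^ k"
      using assms(1) by (simp add: power_mono)
    have "norm (f x) = \<bar>a (i, j, k)\<bar> * (\<bar>u\<bar> ^ i * \<bar>v\<bar> ^ j) * \<bar>w\<bar> ^ k"
      by (simp add: x f_def abs_mult power_abs)
    also have "\<dots> \<le> \<bar>a (i, j, k)\<bar> * ((s / \<rho>) ^ 2 * (\<rho> ^ i * \<rho> ^ j)) * \<rho> ^ k"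
      using radius_pos by (intro mult_mono[OF mult_left_mono[OF uv] w]) auto
    also have "\<dots> = (s / \<rho>) ^ 2 * majorant x"
      by (simp add: x majorant_def)
    finally show ?thesis .
  qed
  have "f summable_on higher_order"
    unfolding f_def using assms by (intro terms_summable) auto
  then have norm_summable: "(\<lambda>x. norm (f x)) summable_on higher_order"
    using summable_on_iff_abs_summable_on_real by blast
  have "\<bar>\<Sum>\<^sub>\<infinity>x\<in>higher_order. f x\<bar> \<le> (\<Sum>\<^sub>\<infinity>x\<in>higher_order. norm (f x))"
    using norm_infsum_bound[OF norm_summable] by simp
  also have "\<dots> \<le> (\<Sum>\<^sub>\<infinity>x\<in>higher_order. (s / \<rho>) ^ 2 * majorant x)"
    by (rule infsum_mono[OF norm_summable summable_on_cmult_right[OF majorant_summable] term_bound])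
  also have "\<dots> = (s / \<rho>) ^ 2 * (\<Sum>\<^sub>\<infinity>x\<in>higher_order. majorant x)"
    by (rule infsum_cmult_right')
  also have "\<dots> \<le> (s / \<rho>) ^ 2 * (\<Sum>\<^sub>\<infinity>x. majorant x)"
    by (intro mult_left_mono infsum_mono_neutral majorant_summable majorant_nonneg) auto
  finally show ?thesis
    by (simp add: f_def)
qed

lemma first_order_remainder_bound:
  assumes "\<bar>w\<bar> \<le> \<rho>" "0 \<le> s" "s \<le> \<rho>" "\<bar>u\<bar> \<le> s" "\<bar>v\<bar> \<le> s"
  shows "\<bar>F (I0 + u) (\<theta>0 + v) (e + w) - F I0 \<theta>0 (e + w) - (u * coeff_series 1 0 w + v * coeff_series 0 1 w)\<bar>
    \<le> (s / \<rho>) ^ 2 * (\<Sum>\<^sub>\<infinity>x. majorant x)"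
proof -
  have "F I0 \<theta>0 (e + w) = coeff_series 0 0 w"
    using sums_unique2[OF expansion_center[OF assms(1)] has_sum_imp_sums[OF has_sum_coeff_series[OF assms(1)]]] .
  then show ?thesis
    using higher_order_bound[OF assms] first_order_decomposition[of u v w] assms by simp
qed

lemma has_derivative_first_order:
  assumes w: "\<bar>w\<bar> \<le> \<rho>"
  shows "((\<lambda>z. F (I0 + fst z) (\<theta>0 + snd z) (e + w)) has_derivative
           (\<lambda>z. fst z * coeff_series 1 0 w + snd z * coeff_series 0 1 w)) (at 0)"
  unfolding has_derivative_at_alt
proof (intro conjI allI impI)
  show "bounded_linear (\<lambda>z :: real \<times> real. fst z * coeff_series 1 0 w + snd z * coeff_series 0 1 w)"
    by (intro bounded_linear_add bounded_linear_mult_const bounded_linear_fst bounded_linear_snd bounded_linear_ident)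
  define A where "A = (\<Sum>\<^sub>\<infinity>x. majorant x)"
  have A: "A \<ge> 0"
    unfolding A_def by (intro infsum_nonneg majorant_nonneg)
  fix \<epsilon> :: real assume "\<epsilon> > 0"
  define d where "d = min \<rho> (\<epsilon> * \<rho>\<^sup>2 / (A + 1))"
  have "d > 0"
    using radius_pos \<open>\<epsilon> > 0\<close> A by (simp add: d_def)
  moreover have "norm (F (I0 + fst z) (\<theta>0 + snd z) (e + w) - F (I0 + fst 0) (\<theta>0 + snd 0) (e + w)
      - (fst (z - 0) * coeff_series 1 0 w + snd (z - 0) * coeff_series 0 1 w)) \<le> \<epsilon> * norm (z - 0)"
    if z: "norm (z - 0) < d" for z :: "real \<times> real"
  proof -
    define s where "s = norm z"
    have s: "0 \<le> s" "s \<le> \<rho>" "\<bar>fst z\<bar> \<le> s" "\<bar>snd z\<bar> \<le> s"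
      using z norm_fst_le[of "fst z" "snd z"] norm_snd_le[of "snd z" "fst z"] by (auto simp: s_def d_def)
    have "s * A \<le> \<epsilon> * \<rho>\<^sup>2"
    proof -
      have "s * (A + 1) < \<epsilon> * \<rho>\<^sup>2"
        using z A by (simp add: s_def d_def field_simps)
      then show ?thesis
        using s(1) by (simp add: algebra_simps)
    qed
    then have "(s / \<rho>) ^ 2 * A \<le> \<epsilon> * s"
      using radius_pos s(1) mult_left_mono[of "s * A" "\<epsilon> * \<rho>\<^sup>2" s]
      by (simp add: power2_eq_square field_simps)
    moreover have "\<bar>F (I0 + fst z) (\<theta>0 + snd z) (e + w) - F I0 \<theta>0 (e + w)
        - (fst z * coeff_series 1 0 w + snd z * coeff_series 0 1 w)\<bar> \<le> (s / \<rho>) ^ 2 * A"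
      using first_order_remainder_bound[OF w s] by (simp add: A_def)
    ultimately show ?thesis
      by (simp add: s_def)
  qed
  ultimately show "\<exists>d>0. \<forall>z. norm (z - 0) < d \<longrightarrow>
      norm (F (I0 + fst z) (\<theta>0 + snd z) (e + w) - F (I0 + fst 0) (\<theta>0 + snd 0) (e + w)
        - (fst (z - 0) * coeff_series 1 0 w + snd (z - 0) * coeff_series 0 1 w)) \<le> \<epsilon> * norm (z - 0)"
    by blast
qed

end

section \<open>Formal first integrals\<close>

text \<open>The coefficients c k of a formal power series \<Sum> c k I \<theta> \<epsilon>^k solving
  I \<partial>F/\<partial>\<theta> + \<epsilon> (\<beta> sin \<theta> + 1) \<partial>F/\<partial>I = 0, order by order in \<epsilon>.\<close>

context
  fixes c p q :: "nat \<Rightarrow> real \<Rightarrow> real \<Rightarrow> real" and \<beta> :: real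
  assumes periodic: "\<And>k I \<theta>. c k I (\<theta> + 2 * pi) = c k I \<theta>"
    and deriv_theta: "\<And>k I \<theta>. ((\<lambda>y. c k I y) has_real_derivative p k I \<theta>) (at \<theta>)"
    and deriv_I: "\<And>k I \<theta>. ((\<lambda>x. c k x \<theta>) has_real_derivative q k I \<theta>) (at I)"
    and order_0: "\<And>I \<theta>. I * p 0 I \<theta> = 0"
    and order_Suc: "\<And>k I \<theta>. I * p (Suc k) I \<theta> + (\<beta> * sin \<theta> + 1) * q k I \<theta> = 0"
begin

lemma formal_coeff_theta_independent:
  assumes "\<And>I \<theta>. I * p k I \<theta> = 0"
  shows "c k I \<theta> = c k I 0"
proof -
  have off_axis: "c k I \<theta> = c k I 0" if "I \<noteq> 0" for I \<theta>
  proof -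
    have "((\<lambda>\<theta>. c k I \<theta>) has_real_derivative 0) (at \<theta>)" for \<theta>
      using deriv_theta[where k=k and I=I and \<theta>=\<theta>] assms[of I \<theta>] that by simp
    then show ?thesis
      using DERIV_isconst_all by blast
  qed
  show ?thesis
  proof (cases "I = 0")
    case True
    have "((\<lambda>I. c k I \<theta>) \<longlongrightarrow> c k 0 \<theta>) (at 0)"
      using DERIV_isCont[OF deriv_I[where k=k and I=0 and \<theta>=\<theta>]] by (simp add: isCont_def)
    moreover have "eventually (\<lambda>I. c k I \<theta> = c k I 0) (at (0::real))"
      unfolding eventually_at_filter by (rule always_eventually) (auto intro: off_axis)
    ultimately have "((\<lambda>I. c k I 0) \<longlongrightarrow> c k 0 \<theta>) (at 0)"
      by (rule Lim_transform_eventually)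
    moreover have "((\<lambda>I. c k I 0) \<longlongrightarrow> c k 0 0) (at 0)"
      using DERIV_isCont[OF deriv_I[where k=k and I=0 and \<theta>=0]] by (simp add: isCont_def)
    ultimately show ?thesis
      using True tendsto_unique[OF at_neq_bot] by simp
  qed (rule off_axis)
qed

lemma formal_coeff_I_independent:
  assumes theta_independent: "\<And>I \<theta>. c k I \<theta> = c k I 0"
  shows "c k I \<theta> = c k 0 0"
proof -
  have "q k I 0 = 0" for I
  proof (cases "I = 0")
    case True
    then show ?thesis
      using order_Suc[of 0 k 0] by simp
  next
    case False
    \<comment> \<open>\<psi> is constant, but only its second part changes over a period of \<theta>.\<close>
    define \<psi> where "\<psi> \<theta> = I * c (Suc k) I \<theta> + q k I 0 * (\<theta> - \<beta> * cos \<theta>)" for \<theta>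
    have q_const: "q k I \<theta> = q k I 0" for \<theta>
    proof -
      have "(\<lambda>x. c k x \<theta>) = (\<lambda>x. c k x 0)"
        using theta_independent by blast
      then show ?thesis
        using DERIV_unique deriv_I[where k=k and I=I] by metis
    qed
    then have "(\<psi> has_real_derivative 0) (at \<theta>)" for \<theta>
      unfolding \<psi>_def using order_Suc[of I k \<theta>] q_const[of \<theta>]
      by (auto intro!: derivative_eq_intros deriv_theta simp: algebra_simps)
    then have "\<psi> (0 + 2 * pi) = \<psi> 0"
      using DERIV_isconst_all by blast
    then show ?thesis
      using periodic[of "Suc k" I 0] by (simp add: \<psi>_def algebra_simps)
  qed
  then have "((\<lambda>I. c k I 0) has_real_derivative 0) (at I)" for I
    using deriv_I[where k=k and I=I and \<theta>=0] by simp
  then show ?thesis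
    using theta_independent DERIV_isconst_all by metis
qed

lemma formal_coeff_constant: "c k I \<theta> = c k 0 0"
proof (induction k arbitrary: I \<theta>)
  case 0
  show ?case
    by (intro formal_coeff_I_independent formal_coeff_theta_independent order_0)
next
  case (Suc k)
  have "q k I \<theta> = 0" for I \<theta>
  proof -
    have "(\<lambda>x. c k x \<theta>) = (\<lambda>_. c k 0 0)"
      using Suc.IH by blast
    then have "((\<lambda>x. c k x \<theta>) has_real_derivative 0) (at I)"
      by simp
    then show ?thesis
      using DERIV_unique[OF deriv_I[where k=k and I=I and \<theta>=\<theta>]] by blast
  qed
  then have "I * p (Suc k) I \<theta> = 0" for I \<theta>
    using order_Suc[of I k \<theta>] by simp
  then show ?case
    by (intro formal_coeff_I_independent formal_coeff_theta_independent)
qed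

end

lemma first_integral_gradient_relation:
  assumes "first_integral \<beta> \<epsilon> G"
    and G: "((\<lambda>z. G (I0 + fst z) (\<theta>0 + snd z)) has_derivative (\<lambda>z. fst z * Q + snd z * P)) (at 0)"
  shows "I0 * P + \<epsilon> * (\<beta> * sin \<theta>0 + 1) * Q = 0"
proof -
  obtain x y where "x 0 = I0" "y 0 = \<theta>0"
    and x: "\<And>t. (x has_real_derivative \<epsilon> * (\<beta> * sin (y t) + 1)) (at t)"
    and y: "\<And>t. (y has_real_derivative x t) (at t)"
    by (rule first_integral_system_solution[of I0 \<theta>0 \<epsilon> \<beta>]) blast
  define D where "D = \<epsilon> * (\<beta> * sin \<theta>0 + 1)"
  have "((\<lambda>t. (x t - I0, y t - \<theta>0)) has_derivative (\<lambda>h. (D * h, I0 * h))) (at 0)"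
    using x[of 0] y[of 0] \<open>x 0 = I0\<close> \<open>y 0 = \<theta>0\<close>
    by (auto simp: D_def has_field_derivative_def intro!: derivative_eq_intros)
  moreover have "((\<lambda>z. G (I0 + fst z) (\<theta>0 + snd z)) has_derivative (\<lambda>z. fst z * Q + snd z * P))
      (at ((\<lambda>t. (x t - I0, y t - \<theta>0)) 0))"
    using G \<open>x 0 = I0\<close> \<open>y 0 = \<theta>0\<close> by (simp add: zero_prod_def)
  ultimately have "((\<lambda>t. G (x t) (y t)) has_derivative (\<lambda>h. D * h * Q + I0 * h * P)) (at 0)"
    using has_derivative_compose by fastforce
  moreover have "G (x t) (y t) = G I0 \<theta>0" for t
    using assms(1) x y \<open>x 0 = I0\<close> \<open>y 0 = \<theta>0\<close> unfolding first_integral_def by metis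
  ultimately have "((\<lambda>t. G I0 \<theta>0) has_derivative (\<lambda>h. D * h * Q + I0 * h * P)) (at 0)"
    by simp
  from has_derivative_unique[OF this has_derivative_const]
  have "D * 1 * Q + I0 * 1 * P = 0"
    by metis
  then show ?thesis
    by (simp add: D_def algebra_simps)
qed

lemma first_integral_coeff_relations:
  assumes "triple_expansion F a I0 \<theta>0 0 \<rho>"
    and first_integral: "\<And>w. \<bar>w\<bar> < \<rho> \<Longrightarrow> first_integral \<beta> w (\<lambda>I \<theta>. F I \<theta> w)"
  shows "I0 * a (0, 1, 0) = 0"
    and "I0 * a (0, 1, Suc k) + (\<beta> * sin \<theta>0 + 1) * a (1, 0, k) = 0"
proof -
  interpret triple_expansion F a I0 \<theta>0 0 \<rho>
    by fact
  define h where "h = \<beta> * sin \<theta>0 + 1"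
  \<comment> \<open>The coefficients of w^k in I0 \<partial>F/\<partial>\<theta> + w h \<partial>F/\<partial>I, which vanishes at (I0, \<theta>0, w).\<close>
  define d where "d k = I0 * a (0, 1, k) + h * (case k of 0 \<Rightarrow> 0 | Suc m \<Rightarrow> a (1, 0, m))" for k
  have "(\<lambda>k. d k * w ^ k) sums 0" if "\<bar>w\<bar> < \<rho>" for w
  proof -
    have w: "\<bar>w\<bar> \<le> \<rho>"
      using that by simp
    define f where "f k = (case k of 0 \<Rightarrow> 0 | Suc m \<Rightarrow> a (1, 0, m)) * w ^ k" for k
    have "(\<lambda>k. f (Suc k)) sums (w * coeff_series 1 0 w)"
      using sums_mult[OF has_sum_imp_sums[OF has_sum_coeff_series[OF w]], of w] by (simp add: f_def mult_ac)
    then have "f sums (w * coeff_series 1 0 w)"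
      by (subst (asm) sums_Suc_iff) (simp add: f_def)
    then have "(\<lambda>k. I0 * (a (0, 1, k) * w ^ k) + h * f k)
        sums (I0 * coeff_series 0 1 w + h * (w * coeff_series 1 0 w))"
      by (intro sums_add sums_mult has_sum_imp_sums[OF has_sum_coeff_series[OF w]])
    moreover have "I0 * coeff_series 0 1 w + w * h * coeff_series 1 0 w = 0"
      using first_integral_gradient_relation[OF first_integral[OF that] has_derivative_first_order[OF w, simplified]]
      by (simp add: h_def)
    ultimately show ?thesis
      by (simp add: d_def f_def algebra_simps)
  qed
  then have "powser_expansion (\<lambda>_. 0) d"
    unfolding powser_expansion_def using radius_pos by blast
  moreover have "powser_expansion (\<lambda>_. 0) (\<lambda>_. 0)"
    unfolding powser_expansion_def using radius_pos by auto
  ultimately have "d = (\<lambda>_. 0)"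
    by (rule powser_expansion_unique)
  then have "d 0 = 0" "d (Suc k) = 0"
    by simp_all
  then show "I0 * a (0, 1, 0) = 0" "I0 * a (0, 1, Suc k) + (\<beta> * sin \<theta>0 + 1) * a (1, 0, k) = 0"
    by (simp_all add: d_def h_def)
qed

section \<open>The Taylor coefficients in \<epsilon> of an analytic first integral\<close>

lemma real_analytic3_on_triple_expansion:
  assumes "real_analytic3_on F U" "(I0, \<theta>0, e) \<in> U"
  obtains a \<rho> where "triple_expansion F a I0 \<theta>0 e \<rho>"
    and "\<And>u v w. \<bar>u\<bar> \<le> \<rho> \<Longrightarrow> \<bar>v\<bar> \<le> \<rho> \<Longrightarrow> \<bar>w\<bar> \<le> \<rho> \<Longrightarrow> (I0 + u, \<theta>0 + v, e + w) \<in> U"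
proof -
  from assms(1)[unfolded real_analytic3_on_def, rule_format, OF assms(2)]
  obtain r a where r: "r > 0" "ball (I0, \<theta>0, e) r \<subseteq> U"
    and expansion: "\<And>x. x \<in> ball (I0, \<theta>0, e) r \<Longrightarrow>
       ((\<lambda>(i, j, k). a (i, j, k) * (fst x - I0) ^ i * (fst (snd x) - \<theta>0) ^ j * (snd (snd x) - e) ^ k)
         has_sum F (fst x) (fst (snd x)) (snd (snd x))) UNIV"
    unfolding prod.sel by blast
  have in_ball: "(I0 + u, \<theta>0 + v, e + w) \<in> ball (I0, \<theta>0, e) r"
    if "\<bar>u\<bar> \<le> r / 2" "\<bar>v\<bar> \<le> r / 2" "\<bar>w\<bar> \<le> r / 2" for u v w
  proof -
    have "u\<^sup>2 + (v\<^sup>2 + w\<^sup>2) \<le> 3 * (r / 2)\<^sup>2"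
      using power_mono[OF that(1), of 2] power_mono[OF that(2), of 2] power_mono[OF that(3), of 2] by simp
    also have "\<dots> < r\<^sup>2"
      using r(1) by (simp add: power2_eq_square)
    finally show ?thesis
      using r(1) real_sqrt_less_iff[of _ "r\<^sup>2"] by (simp add: dist_Pair_Pair dist_real_def)
  qed
  show ?thesis
  proof
    show "triple_expansion F a I0 \<theta>0 e (r / 2)"
      using r(1) expansion[OF in_ball] by unfold_locales auto
    show "(I0 + u, \<theta>0 + v, e + w) \<in> U" if "\<bar>u\<bar> \<le> r / 2" "\<bar>v\<bar> \<le> r / 2" "\<bar>w\<bar> \<le> r / 2" for u v w
      using in_ball[OF that] r(2) by blast
  qed
qed

definition eps_coeff :: "(real \<Rightarrow> real \<Rightarrow> real \<Rightarrow> real) \<Rightarrow> real \<Rightarrow> real \<Rightarrow> nat \<Rightarrow> real" where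
  "eps_coeff F I \<theta> = (SOME d. powser_expansion (F I \<theta>) d)"

context
  fixes F :: "real \<Rightarrow> real \<Rightarrow> real \<Rightarrow> real" and \<epsilon>0 \<beta> :: real
  assumes eps0_pos: "\<epsilon>0 > 0"
    and analytic: "real_analytic3_on F (UNIV \<times> UNIV \<times> {-\<epsilon>0<..<\<epsilon>0})"
    and periodic: "\<forall>I \<theta>. \<forall>\<epsilon>\<in>{-\<epsilon>0<..<\<epsilon>0}. F I (\<theta> + 2 * pi) \<epsilon> = F I \<theta> \<epsilon>"
    and first_integral: "\<forall>\<epsilon>\<in>{-\<epsilon>0<..<\<epsilon>0}. first_integral \<beta> \<epsilon> (\<lambda>I \<theta>. F I \<theta> \<epsilon>)"
begin

lemma triple_expansion_at_eps_0:
  obtains a \<rho> where "triple_expansion F a I \<theta> 0 \<rho>" and "\<And>w. \<bar>w\<bar> \<le> \<rho> \<Longrightarrow> w \<in> {-\<epsilon>0<..<\<epsilon>0}"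
proof -
  have "(I, \<theta>, 0) \<in> UNIV \<times> UNIV \<times> {-\<epsilon>0<..<\<epsilon>0}"
    using eps0_pos by simp
  from real_analytic3_on_triple_expansion[OF analytic this]
  obtain a \<rho> where expansion: "triple_expansion F a I \<theta> 0 \<rho>"
    and cube: "\<And>u v w. \<bar>u\<bar> \<le> \<rho> \<Longrightarrow> \<bar>v\<bar> \<le> \<rho> \<Longrightarrow> \<bar>w\<bar> \<le> \<rho> \<Longrightarrow>
      (I + u, \<theta> + v, 0 + w) \<in> UNIV \<times> UNIV \<times> {-\<epsilon>0<..<\<epsilon>0}"
    by blast
  show ?thesis
  proof (rule that[OF expansion])
    show "w \<in> {-\<epsilon>0<..<\<epsilon>0}" if "\<bar>w\<bar> \<le> \<rho>" for w
      using cube[of 0 0 w] that triple_expansion.radius_pos[OF expansion] by simp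
  qed
qed

lemma powser_expansion_eps_slice:
  assumes "e \<in> {-\<epsilon>0<..<\<epsilon>0}"
  shows "\<exists>d. powser_expansion (\<lambda>w. F I \<theta> (e + w)) d"
proof -
  have "(I, \<theta>, e) \<in> UNIV \<times> UNIV \<times> {-\<epsilon>0<..<\<epsilon>0}"
    using assms by simp
  from real_analytic3_on_triple_expansion[OF analytic this]
  obtain a \<rho> where "triple_expansion F a I \<theta> e \<rho>"
    and "\<And>u v w. \<bar>u\<bar> \<le> \<rho> \<Longrightarrow> \<bar>v\<bar> \<le> \<rho> \<Longrightarrow> \<bar>w\<bar> \<le> \<rho> \<Longrightarrow>
      (I + u, \<theta> + v, e + w) \<in> UNIV \<times> UNIV \<times> {-\<epsilon>0<..<\<epsilon>0}"
    by blast
  then have "powser_expansion (\<lambda>w. F I \<theta> (e + w)) (\<lambda>k. a (0, 0, k))"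
    by (intro triple_expansion.powser_expansion_center)
  then show ?thesis
    by (rule exI[where x="\<lambda>k. a (0, 0, k)"])
qed

lemma powser_expansion_eps_coeff:
  shows "powser_expansion (F I \<theta>) (eps_coeff F I \<theta>)"
proof -
  have "\<exists>d. powser_expansion (F I \<theta>) d"
    using powser_expansion_eps_slice[of 0 I \<theta>] eps0_pos by simp
  then show ?thesis
    unfolding eps_coeff_def by (rule someI_ex)
qed

lemma eps_coeff_eqI:
  assumes "powser_expansion (F I \<theta>) d"
  shows "eps_coeff F I \<theta> = d"
  using powser_expansion_unique[OF powser_expansion_eps_coeff assms] .

lemma eps_coeff_periodic: "eps_coeff F I (\<theta> + 2 * pi) = eps_coeff F I \<theta>"
proof (rule eps_coeff_eqI)
  show "powser_expansion (F I (\<theta> + 2 * pi)) (eps_coeff F I \<theta>)"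
    by (rule powser_expansion_cong[OF powser_expansion_eps_coeff eps0_pos])
       (use periodic in \<open>simp add: abs_less_iff\<close>)
qed

lemma eps_coeff_has_derivative:
  assumes "triple_expansion F a I \<theta> 0 \<rho>"
  shows "((\<lambda>y. eps_coeff F I y k) has_real_derivative a (0, 1, k)) (at \<theta>)"
    and "((\<lambda>x. eps_coeff F x \<theta> k) has_real_derivative a (1, 0, k)) (at I)"
proof -
  interpret triple_expansion F a I \<theta> 0 \<rho>
    by fact
  have "(\<lambda>j. a (0, j, k) * v ^ j) sums eps_coeff F I (\<theta> + v) k" if "\<bar>v\<bar> < \<rho>" for v
  proof -
    have "eps_coeff F I (\<theta> + v) = (\<lambda>k. \<Sum>\<^sub>\<infinity>j. a (0, j, k) * v ^ j)"
      using eps_coeff_eqI powser_expansion_theta_shift[of v] that by simp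
    then show ?thesis
      using has_sum_imp_sums[OF has_sum_infsum[OF theta_slice_summable]] that by simp
  qed
  then have "powser_expansion (\<lambda>v. eps_coeff F I (\<theta> + v) k) (\<lambda>j. a (0, j, k))"
    unfolding powser_expansion_def using radius_pos by blast
  then show "((\<lambda>y. eps_coeff F I y k) has_real_derivative a (0, 1, k)) (at \<theta>)"
    using powser_expansion_has_derivative by fastforce
  have "(\<lambda>i. a (i, 0, k) * u ^ i) sums eps_coeff F (I + u) \<theta> k" if "\<bar>u\<bar> < \<rho>" for u
  proof -
    have "eps_coeff F (I + u) \<theta> = (\<lambda>k. \<Sum>\<^sub>\<infinity>i. a (i, 0, k) * u ^ i)"
      using eps_coeff_eqI powser_expansion_I_shift[of u] that by simp
    then show ?thesis
      using has_sum_imp_sums[OF has_sum_infsum[OF I_slice_summable]] that by simp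
  qed
  then have "powser_expansion (\<lambda>u. eps_coeff F (I + u) \<theta> k) (\<lambda>i. a (i, 0, k))"
    unfolding powser_expansion_def using radius_pos by blast
  then show "((\<lambda>x. eps_coeff F x \<theta> k) has_real_derivative a (1, 0, k)) (at I)"
    using powser_expansion_has_derivative by fastforce
qed

lemma eps_coeff_derivatives:
  obtains a :: "nat \<times> nat \<times> nat \<Rightarrow> real" where "I * a (0, 1, 0) = 0"
    and "\<And>k. I * a (0, 1, Suc k) + (\<beta> * sin \<theta> + 1) * a (1, 0, k) = 0"
    and "\<And>k. ((\<lambda>y. eps_coeff F I y k) has_real_derivative a (0, 1, k)) (at \<theta>)"
    and "\<And>k. ((\<lambda>x. eps_coeff F x \<theta> k) has_real_derivative a (1, 0, k)) (at I)"
proof -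
  obtain a \<rho> where local_expansion: "triple_expansion F a I \<theta> 0 \<rho>"
    and small: "\<And>w. \<bar>w\<bar> \<le> \<rho> \<Longrightarrow> w \<in> {-\<epsilon>0<..<\<epsilon>0}"
    using triple_expansion_at_eps_0[where I=I and \<theta>=\<theta>] by blast
  have "first_integral \<beta> w (\<lambda>I \<theta>. F I \<theta> w)" if "\<bar>w\<bar> < \<rho>" for w
    using first_integral small that by simp
  from first_integral_coeff_relations[OF local_expansion this] eps_coeff_has_derivative[OF local_expansion]
  show ?thesis
    by (rule that)
qed

lemma eps_coeff_constant: "eps_coeff F I \<theta> k = eps_coeff F 0 0 k"
proof -
  define p where "p k I \<theta> = deriv (\<lambda>y. eps_coeff F I y k) \<theta>" for k I \<theta>
  define q where "q k I \<theta> = deriv (\<lambda>x. eps_coeff F x \<theta> k) I" for k I \<theta>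
  have local: "((\<lambda>y. eps_coeff F I y k) has_real_derivative p k I \<theta>) (at \<theta>)
      \<and> ((\<lambda>x. eps_coeff F x \<theta> k) has_real_derivative q k I \<theta>) (at I)
      \<and> I * p 0 I \<theta> = 0 \<and> I * p (Suc k) I \<theta> + (\<beta> * sin \<theta> + 1) * q k I \<theta> = 0" for k I \<theta>
  proof -
    obtain a :: "nat \<times> nat \<times> nat \<Rightarrow> real" where "I * a (0, 1, 0) = 0"
      and "\<And>k. I * a (0, 1, Suc k) + (\<beta> * sin \<theta> + 1) * a (1, 0, k) = 0"
      and deriv_theta: "\<And>k. ((\<lambda>y. eps_coeff F I y k) has_real_derivative a (0, 1, k)) (at \<theta>)"
      and deriv_I: "\<And>k. ((\<lambda>x. eps_coeff F x \<theta> k) has_real_derivative a (1, 0, k)) (at I)"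
      using eps_coeff_derivatives[where I=I and \<theta>=\<theta>] by blast
    moreover have "p k I \<theta> = a (0, 1, k)" "q k I \<theta> = a (1, 0, k)" for k
      unfolding p_def q_def using DERIV_imp_deriv deriv_theta deriv_I by blast+
    ultimately show ?thesis
      by simp
  qed
  show ?thesis
  proof (rule formal_coeff_constant[where c="\<lambda>k I \<theta>. eps_coeff F I \<theta> k" and p=p and q=q and \<beta>=\<beta>])
    show "eps_coeff F I (\<theta> + 2 * pi) k = eps_coeff F I \<theta> k" for k I \<theta>
      by (simp add: eps_coeff_periodic)
  qed (use local in blast)+
qed

lemma analytic_first_integral_constant:
  assumes "\<epsilon> \<in> {-\<epsilon>0<..<\<epsilon>0}"
  shows "F I1 \<theta>1 \<epsilon> = F I2 \<theta>2 \<epsilon>"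
proof -
  have same_coeffs: "eps_coeff F I1 \<theta>1 = eps_coeff F I2 \<theta>2"
    by (rule ext) (metis eps_coeff_constant)
  obtain \<delta> where "\<delta> > 0" and "\<And>w. \<bar>w\<bar> < \<delta> \<Longrightarrow> F I1 \<theta>1 w - F I2 \<theta>2 w = 0"
    using powser_expansion_same_coeffs[OF powser_expansion_eps_coeff[of I1 \<theta>1]
      powser_expansion_eps_coeff[of I2 \<theta>2, folded same_coeffs]] by auto
  moreover have "\<exists>d. powser_expansion (\<lambda>w. F I1 \<theta>1 (e + w) - F I2 \<theta>2 (e + w)) d"
    if "e \<in> {-\<epsilon>0<..<\<epsilon>0}" for e
    using powser_expansion_eps_slice[OF that] powser_expansion_diff by blast
  ultimately have "F I1 \<theta>1 \<epsilon> - F I2 \<theta>2 \<epsilon> = 0"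
    using powser_expansions_vanishing[where D="\<lambda>e. F I1 \<theta>1 e - F I2 \<theta>2 e" and J="{-\<epsilon>0<..<\<epsilon>0}"]
      eps0_pos assms by (simp add: is_interval_1)
  then show ?thesis
    by simp
qed

end

theorem proposition6p1:
  fixes \<beta> :: real
  shows "\<not> (\<exists>\<epsilon>0 > 0. \<exists>F :: real \<Rightarrow> real \<Rightarrow> real \<Rightarrow> real.
              real_analytic3_on F (UNIV \<times> UNIV \<times> {-\<epsilon>0<..<\<epsilon>0})
            \<and> (\<forall>I \<theta>. \<forall>\<epsilon>\<in>{-\<epsilon>0<..<\<epsilon>0}. F I (\<theta> + 2 * pi) \<epsilon> = F I \<theta> \<epsilon>)
            \<and> (\<forall>\<epsilon>\<in>{-\<epsilon>0<..<\<epsilon>0}. first_integral \<beta> \<epsilon> (\<lambda>I \<theta>. F I \<theta> \<epsilon>))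
            \<and> (\<exists>\<epsilon>\<in>{-\<epsilon>0<..<\<epsilon>0}. \<exists>I1 \<theta>1 I2 \<theta>2. F I1 \<theta>1 \<epsilon> \<noteq> F I2 \<theta>2 \<epsilon>))"
  using analytic_first_integral_constant by blast

end
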